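(* (i) Let $n \ge 4$ be even. For every $\xi \in \mathbb{H} \cap \mathbb{D}$ there exists an ordered sample $x_1 < \dots < x_n$ of reals whose relative position of the maximum likelihood estimate is $\xi$. (ii) Let $n \ge 3$ be odd. Then there exists $\epsilon_n > 0$ such that for every $\xi \in \mathbb{H} \cap B(i, \epsilon_n)$ there is no ordered sample $x_1 < \dots < x_n$ of reals whose relative position of the maximum likelihood estimate is $\xi$.
   Context: $\mathbb{H} = \{\theta\in\mathbb{C}:\Im\theta>0\}$, $\mathbb{D}$ is the open unit disc, and $B(i,\epsilon)$ is the open disc of center $i$ and radius $\epsilon$. For an ordered real sample $x_1<\dots<x_n$ ($n\ge3$), the Cauchy maximum likelihood estimate $\hat\theta$ is the unique maximizer over $\theta=\mu+i\sigma\in\mathbb{H}$ of $\prod_{j=1}^n \frac{\sigma}{\pi((x_j-\mu)^2+\sigma^2)}$; it satisfies $|\hat\theta - (x_1+x_n)/2| \le (x_n-x_1)/2$. The relative position of $\hat\theta$ is $\xi = \frac{2\hat\theta - (x_n + x_1)}{x_n - x_1} \in \mathbb{H}\cap\mathbb{D}$. *)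

theory Defs
  imports "HOL-Analysis.Analysis"
begin

definition cauchy_lik :: "nat \<Rightarrow> (nat \<Rightarrow> real) \<Rightarrow> complex \<Rightarrow> real" where
  "cauchy_lik n x \<theta> =
     (\<Prod>j<n. Im \<theta> / (pi * ((x j - Re \<theta>)\<^sup>2 + (Im \<theta>)\<^sup>2)))"

definition is_cauchy_mle :: "nat \<Rightarrow> (nat \<Rightarrow> real) \<Rightarrow> complex \<Rightarrow> bool" where
  "is_cauchy_mle n x \<theta> \<longleftrightarrow> 0 < Im \<theta> \<and>
     (\<forall>\<eta>. 0 < Im \<eta> \<longrightarrow> cauchy_lik n x \<eta> \<le> cauchy_lik n x \<theta>)"

text \<open>Ordered sample x(0) < x(1) < ... < x(n-1) (indices shifted by one w.r.t. the paper).\<close>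
definition ordered_sample :: "nat \<Rightarrow> (nat \<Rightarrow> real) \<Rightarrow> bool" where
  "ordered_sample n x \<longleftrightarrow> (\<forall>i j. i < j \<longrightarrow> j < n \<longrightarrow> x i < x j)"

definition rel_pos :: "nat \<Rightarrow> (nat \<Rightarrow> real) \<Rightarrow> complex \<Rightarrow> complex" where
  "rel_pos n x \<theta> = (2 * \<theta> - complex_of_real (x 0 + x (n - 1))) / complex_of_real (x (n - 1) - x 0)"

definition mle_rel_pos_is :: "nat \<Rightarrow> (nat \<Rightarrow> real) \<Rightarrow> complex \<Rightarrow> bool" where
  "mle_rel_pos_is n x \<xi> \<longleftrightarrow> (\<exists>\<theta>. is_cauchy_mle n x \<theta> \<and> rel_pos n x \<theta> = \<xi>)"

end

theory Submission
  imports Defs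
begin

(* Two observations a < b bound the product of their Cauchy densities at \<theta> by
   1 / (pi^2 (b - a)^2), with equality exactly when \<theta> lies on the circle with diameter [a, b]
   (Lagrange's identity). For even n one can therefore choose n/2 pairs whose circles all pass
   through a prescribed \<xi>, with smallest point -1 and largest point 1; then \<xi> itself is the
   maximum likelihood estimate and its relative position.

   For odd n = 2k + 1, let \<beta>_j = arctan ((x_j - \<mu>) / \<sigma>) be the angles under which the
   observations are seen from the estimate \<theta> = \<mu> + i \<sigma>. The score equations say that the unit
   vectors exp (2 i \<beta>_j) sum to zero, which forces 2k cos (\<beta>_n - \<beta>_1) \<le> -1: the sample range
   is seen from \<theta> under a definitely obtuse angle. In terms of the relative position this is
   (Im \<xi>)^2 \<le> (n - 1) (1 - |\<xi>|^2), which fails near \<xi> = i. *)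

definition cauchy_pdf :: "complex \<Rightarrow> real \<Rightarrow> real" where
  "cauchy_pdf \<theta> t = Im \<theta> / (pi * ((t - Re \<theta>)\<^sup>2 + (Im \<theta>)\<^sup>2))"

lemma cauchy_lik_eq_prod: "cauchy_lik n x \<theta> = (\<Prod>j<n. cauchy_pdf \<theta> (x j))"
  unfolding cauchy_lik_def cauchy_pdf_def ..

lemma cauchy_pdf_pos: "0 < Im \<theta> \<Longrightarrow> 0 < cauchy_pdf \<theta> t"
  unfolding cauchy_pdf_def by (simp add: add_nonneg_pos)

lemma cauchy_pdf_pair:
  fixes \<theta> :: complex and a b :: real
  defines "m \<equiv> Re \<theta>" and "s \<equiv> Im \<theta>"
  assumes "0 < s"
  shows "cauchy_pdf \<theta> a * cauchy_pdf \<theta> b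
           = s\<^sup>2 / (pi\<^sup>2 * (((a - m) * (b - m) + s\<^sup>2)\<^sup>2 + s\<^sup>2 * (b - a)\<^sup>2))"
proof -
  have lagrange: "((a - m)\<^sup>2 + s\<^sup>2) * ((b - m)\<^sup>2 + s\<^sup>2)
      = ((a - m) * (b - m) + s\<^sup>2)\<^sup>2 + s\<^sup>2 * (b - a)\<^sup>2"
    by (simp add: power2_eq_square algebra_simps)
  show ?thesis
    unfolding cauchy_pdf_def m_def[symmetric] s_def[symmetric] lagrange[symmetric]
    by (simp add: power2_eq_square)
qed

lemma cauchy_pdf_pair_le:
  assumes "0 < Im \<theta>" "a \<noteq> b"
  shows "cauchy_pdf \<theta> a * cauchy_pdf \<theta> b \<le> 1 / (pi\<^sup>2 * (b - a)\<^sup>2)"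
proof -
  have "cauchy_pdf \<theta> a * cauchy_pdf \<theta> b \<le> (Im \<theta>)\<^sup>2 / (pi\<^sup>2 * ((Im \<theta>)\<^sup>2 * (b - a)\<^sup>2))"
    unfolding cauchy_pdf_pair[OF assms(1)] using assms
    by (intro divide_left_mono mult_left_mono) (auto intro!: mult_pos_pos add_nonneg_pos)
  also have "\<dots> = 1 / (pi\<^sup>2 * (b - a)\<^sup>2)"
    using assms by (simp add: field_simps)
  finally show ?thesis .
qed

lemma cauchy_pdf_pair_eq:
  assumes "0 < Im \<theta>" "a \<noteq> b" "(a - Re \<theta>) * (b - Re \<theta>) + (Im \<theta>)\<^sup>2 = 0"
  shows "cauchy_pdf \<theta> a * cauchy_pdf \<theta> b = 1 / (pi\<^sup>2 * (b - a)\<^sup>2)"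
  unfolding cauchy_pdf_pair[OF assms(1)] assms(3) using assms(1,2) by (simp add: field_simps)

definition paired_sample :: "nat \<Rightarrow> (nat \<Rightarrow> real) \<Rightarrow> (nat \<Rightarrow> real) \<Rightarrow> nat \<Rightarrow> real" where
  "paired_sample k a b j = (if j < k then a j else b (j - k))"

lemma cauchy_lik_paired_sample:
  "cauchy_lik (2 * k) (paired_sample k a b) \<theta> = (\<Prod>i<k. cauchy_pdf \<theta> (a i) * cauchy_pdf \<theta> (b i))"
proof -
  have "(\<Prod>j<2 * k. f j) = (\<Prod>i<k. f i) * (\<Prod>i<k. f (i + k))" for f :: "nat \<Rightarrow> real"
    using prod.atLeastLessThan_concat[of 0 k "k + k" f] prod.shift_bounds_nat_ivl[of f 0 k k]
    by (simp add: mult_2 atLeast0LessThan)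
  then have "cauchy_lik (2 * k) (paired_sample k a b) \<theta>
      = (\<Prod>i<k. cauchy_pdf \<theta> (a i)) * (\<Prod>i<k. cauchy_pdf \<theta> (b i))"
    unfolding cauchy_lik_eq_prod paired_sample_def by simp
  then show ?thesis by (simp add: prod.distrib)
qed

lemma is_cauchy_mle_paired_sample:
  assumes "0 < Im \<theta>"
    and "\<And>i. i < k \<Longrightarrow> a i \<noteq> b i \<and> (a i - Re \<theta>) * (b i - Re \<theta>) + (Im \<theta>)\<^sup>2 = 0"
  shows "is_cauchy_mle (2 * k) (paired_sample k a b) \<theta>"
  unfolding is_cauchy_mle_def cauchy_lik_paired_sample
proof (intro conjI allI impI prod_mono)
  fix \<eta> i assume "0 < Im \<eta>" "i \<in> {..<k}"
  then show "0 \<le> cauchy_pdf \<eta> (a i) * cauchy_pdf \<eta> (b i)"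
    using cauchy_pdf_pos by (simp add: less_imp_le)
  show "cauchy_pdf \<eta> (a i) * cauchy_pdf \<eta> (b i) \<le> cauchy_pdf \<theta> (a i) * cauchy_pdf \<theta> (b i)"
    using cauchy_pdf_pair_le[OF \<open>0 < Im \<eta>\<close>] cauchy_pdf_pair_eq[OF assms(1)] assms(2) \<open>i \<in> {..<k}\<close>
    by simp
qed (fact assms)

lemma ordered_paired_sample:
  assumes "ordered_sample k a" "ordered_sample k b" "\<And>i j. i < k \<Longrightarrow> j < k \<Longrightarrow> a i < b j"
  shows "ordered_sample (2 * k) (paired_sample k a b)"
  using assms unfolding ordered_sample_def paired_sample_def
  by (auto simp: not_less)

text \<open>The circle centred on the real axis through \<open>a\<close> and \<open>\<theta>\<close> meets the real axis again in
  \<open>circle_partner \<theta> a\<close>; so \<open>\<theta>\<close> lies on the circle with diameter \<open>[a, circle_partner \<theta> a]\<close>.\<close>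
definition circle_partner :: "complex \<Rightarrow> real \<Rightarrow> real" where
  "circle_partner \<theta> a = Re \<theta> + (Im \<theta>)\<^sup>2 / (Re \<theta> - a)"

lemma circle_partner_on_circle:
  "a \<noteq> Re \<theta> \<Longrightarrow> (a - Re \<theta>) * (circle_partner \<theta> a - Re \<theta>) + (Im \<theta>)\<^sup>2 = 0"
  unfolding circle_partner_def by (simp add: field_simps)

lemma circle_partner_involution:
  "a \<noteq> Re \<theta> \<Longrightarrow> Im \<theta> \<noteq> 0 \<Longrightarrow> circle_partner \<theta> (circle_partner \<theta> a) = a"
  unfolding circle_partner_def by (simp add: field_simps)

lemma circle_partner_gt: "a < Re \<theta> \<Longrightarrow> Im \<theta> \<noteq> 0 \<Longrightarrow> Re \<theta> < circle_partner \<theta> a"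
  unfolding circle_partner_def by simp

lemma circle_partner_strict_mono:
  assumes "a < a'" "a' < Re \<theta>" "Im \<theta> \<noteq> 0"
  shows "circle_partner \<theta> a < circle_partner \<theta> a'"
  unfolding circle_partner_def using assms by (simp add: divide_strict_left_mono)

text \<open>The left points are spread evenly over \<open>[-1, g]\<close>, where \<open>g\<close> is the partner of \<open>1\<close>, and
  each is paired with its circle partner; \<open>|\<xi>| < 1\<close> is exactly what makes \<open>-1 < g\<close>.\<close>
lemma even_sample_with_mle_rel_pos:
  assumes "2 \<le> k" "0 < Im \<xi>" "cmod \<xi> < 1"
  shows "\<exists>x. ordered_sample (2 * k) x \<and> mle_rel_pos_is (2 * k) x \<xi>"
proof -
  define g where "g = circle_partner \<xi> 1"
  define a where "a i = -1 + (g + 1) * real i / real (k - 1)" for i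
  define b where "b i = circle_partner \<xi> (a i)" for i
  have Im: "Im \<xi> \<noteq> 0" using assms by simp
  have Re_lt_1: "Re \<xi> < 1"
    using abs_Re_le_cmod[of \<xi>] assms by linarith
  have "(cmod \<xi>)\<^sup>2 < 1" using assms(3) by (simp add: abs_square_less_1)
  then have "(Im \<xi>)\<^sup>2 < (1 + Re \<xi>) * (1 - Re \<xi>)"
    unfolding cmod_power2 by (simp add: algebra_simps power2_eq_square)
  then have g_gt: "-1 < g"
    using Re_lt_1 unfolding g_def circle_partner_def by (simp add: field_simps)
  have g_lt: "g < Re \<xi>"
    using Re_lt_1 Im unfolding g_def circle_partner_def by (simp add: divide_pos_neg)
  have k1: "0 < real (k - 1)" using assms(1) by simp
  have a_mono: "ordered_sample k a"
    unfolding ordered_sample_def a_def using g_gt k1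
    by (auto intro!: divide_strict_right_mono mult_strict_left_mono)
  have a_le: "a i \<le> g" if "i < k" for i
  proof -
    have "(g + 1) * real i / real (k - 1) \<le> g + 1"
      using that g_gt k1 by (simp add: divide_simps)
    then show ?thesis unfolding a_def by simp
  qed
  have a_lt: "a i < Re \<xi>" if "i < k" for i using a_le[OF that] g_lt by simp
  have b_gt: "Re \<xi> < b i" if "i < k" for i
    unfolding b_def using circle_partner_gt a_lt[OF that] Im by blast
  have b_mono: "ordered_sample k b"
    using a_mono a_lt Im unfolding ordered_sample_def b_def
    by (auto intro!: circle_partner_strict_mono)
  have ordered: "ordered_sample (2 * k) (paired_sample k a b)"
    using a_mono b_mono a_lt b_gt by (intro ordered_paired_sample) (meson less_trans)+
  have mle: "is_cauchy_mle (2 * k) (paired_sample k a b) \<xi>"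
    using a_lt b_gt assms(2) unfolding b_def
    by (intro is_cauchy_mle_paired_sample circle_partner_on_circle conjI) force+
  have "a 0 = -1" "b (k - 1) = 1"
    using k1 Re_lt_1 Im unfolding a_def b_def g_def by (simp_all add: circle_partner_involution)
  then have "rel_pos (2 * k) (paired_sample k a b) \<xi> = \<xi>"
    using assms(1) by (simp add: rel_pos_def paired_sample_def)
  then show ?thesis using ordered mle unfolding mle_rel_pos_is_def by blast
qed

lemma ln_cauchy_lik:
  assumes "0 < s"
  shows "ln (cauchy_lik n x (Complex m s)) = (\<Sum>j<n. ln s - ln pi - ln ((x j - m)\<^sup>2 + s\<^sup>2))"
  using assms unfolding cauchy_lik_def
  by (auto simp: ln_prod ln_div ln_mult add_nonneg_pos intro!: sum.cong)

lemma has_real_derivative_ln_cauchy_density_loc: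
  assumes "0 < s"
  shows "((\<lambda>m. ln s - ln pi - ln ((a - m)\<^sup>2 + s\<^sup>2)) has_real_derivative
           2 * (a - m) / ((a - m)\<^sup>2 + s\<^sup>2)) (at m)"
proof -
  have D: "0 < (a - m)\<^sup>2 + s\<^sup>2" using assms by (simp add: add_nonneg_pos)
  show ?thesis
    by (rule derivative_eq_intros refl D)+ (simp add: minus_divide_left)
qed

lemma has_real_derivative_ln_cauchy_density_scale:
  assumes "0 < s"
  shows "((\<lambda>s. ln s - ln pi - ln ((a - m)\<^sup>2 + s\<^sup>2)) has_real_derivative
           1 / s - 2 * s / ((a - m)\<^sup>2 + s\<^sup>2)) (at s)"
proof -
  have D: "0 < (a - m)\<^sup>2 + s\<^sup>2" using assms by (simp add: add_nonneg_pos)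
  show ?thesis
    by (rule derivative_eq_intros refl D assms)+ (simp add: field_simps)
qed

lemma cauchy_mle_score_equations:
  assumes "is_cauchy_mle n x \<theta>"
  defines "D j \<equiv> (x j - Re \<theta>)\<^sup>2 + (Im \<theta>)\<^sup>2"
  shows "(\<Sum>j<n. (x j - Re \<theta>) / D j) = 0" and "(\<Sum>j<n. (Im \<theta>)\<^sup>2 / D j) = n / 2"
proof -
  define \<mu> where "\<mu> = Re \<theta>"
  define \<sigma> where "\<sigma> = Im \<theta>"
  have \<sigma>: "0 < \<sigma>" using assms unfolding is_cauchy_mle_def \<sigma>_def by simp
  define l where "l m s = (\<Sum>j<n. ln s - ln pi - ln ((x j - m)\<^sup>2 + s\<^sup>2))" for m s
  have l_max: "l m s \<le> l \<mu> \<sigma>" if "0 < s" for m s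
  proof -
    have "cauchy_lik n x (Complex m s) \<le> cauchy_lik n x (Complex \<mu> \<sigma>)"
      using assms that unfolding is_cauchy_mle_def \<mu>_def \<sigma>_def by simp
    moreover have "0 < cauchy_lik n x (Complex m s)"
      using that cauchy_pdf_pos by (simp add: cauchy_lik_eq_prod prod_pos)
    ultimately show ?thesis
      unfolding l_def ln_cauchy_lik[symmetric, OF that] ln_cauchy_lik[symmetric, OF \<sigma>] by simp
  qed
  have "((\<lambda>m. l m \<sigma>) has_real_derivative (\<Sum>j<n. 2 * (x j - \<mu>) / D j)) (at \<mu>)"
    unfolding l_def D_def \<mu>_def[symmetric] \<sigma>_def[symmetric]
    by (intro DERIV_sum has_real_derivative_ln_cauchy_density_loc \<sigma>)
  then have "(\<Sum>j<n. 2 * (x j - \<mu>) / D j) = 0"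
    by (rule DERIV_local_max[OF _ zero_less_one]) (simp add: l_max \<sigma>)
  then show "(\<Sum>j<n. (x j - Re \<theta>) / D j) = 0"
    unfolding \<mu>_def times_divide_eq_right[symmetric] sum_distrib_left[symmetric] by simp
  have "((\<lambda>s. l \<mu> s) has_real_derivative (\<Sum>j<n. 1 / \<sigma> - 2 * \<sigma> / D j)) (at \<sigma>)"
    unfolding l_def D_def \<mu>_def[symmetric] \<sigma>_def[symmetric]
    by (intro DERIV_sum has_real_derivative_ln_cauchy_density_scale \<sigma>)
  then have "(\<Sum>j<n. 1 / \<sigma> - 2 * \<sigma> / D j) = 0"
    by (rule DERIV_local_max[OF _ \<sigma>]) (auto intro!: l_max simp: abs_less_iff)
  moreover have "(\<Sum>j<n. 1 / \<sigma> - 2 * \<sigma> / D j) = (n - 2 * (\<Sum>j<n. \<sigma>\<^sup>2 / D j)) / \<sigma>"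
    using \<sigma> by (simp add: sum_subtractf sum_distrib_left sum_divide_distrib diff_divide_distrib power2_eq_square)
  ultimately show "(\<Sum>j<n. (Im \<theta>)\<^sup>2 / D j) = n / 2"
    using \<sigma> unfolding \<sigma>_def by simp
qed

lemma cos_double_arctan: "cos (2 * arctan t) = 2 / (1 + t\<^sup>2) - 1"
proof -
  have "0 < 1 + t\<^sup>2" by (simp add: add_pos_nonneg)
  then show ?thesis
    unfolding cos_double cos_arctan sin_arctan by (simp add: power_divide field_simps)
qed

lemma sin_double_arctan: "sin (2 * arctan t) = 2 * t / (1 + t\<^sup>2)"
proof -
  have "0 < 1 + t\<^sup>2" by (simp add: add_pos_nonneg)
  then show ?thesis
    unfolding sin_double cos_arctan sin_arctan by (simp add: field_simps)
qed

lemma cauchy_mle_double_angles_balanced: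
  assumes "is_cauchy_mle n x \<theta>"
  defines "\<beta> j \<equiv> arctan ((x j - Re \<theta>) / Im \<theta>)"
  shows "(\<Sum>j<n. cos (2 * \<beta> j)) = 0" and "(\<Sum>j<n. sin (2 * \<beta> j)) = 0"
proof -
  define D where "D j = (x j - Re \<theta>)\<^sup>2 + (Im \<theta>)\<^sup>2" for j
  have \<sigma>: "0 < Im \<theta>" using assms unfolding is_cauchy_mle_def by simp
  have one_plus: "1 + ((x j - Re \<theta>) / Im \<theta>)\<^sup>2 = D j / (Im \<theta>)\<^sup>2" for j
    using \<sigma> unfolding D_def by (simp add: field_simps)
  have D: "0 < D j" for j unfolding D_def using \<sigma> by (simp add: add_nonneg_pos)
  have "cos (2 * \<beta> j) = 2 * ((Im \<theta>)\<^sup>2 / D j) - 1" for j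
    unfolding \<beta>_def cos_double_arctan one_plus using \<sigma> D[of j] by simp
  then have "(\<Sum>j<n. cos (2 * \<beta> j)) = 2 * (\<Sum>j<n. (Im \<theta>)\<^sup>2 / D j) - n"
    by (simp add: sum_subtractf sum_distrib_left)
  then show "(\<Sum>j<n. cos (2 * \<beta> j)) = 0"
    using cauchy_mle_score_equations(2)[OF assms(1)] unfolding D_def by simp
  have "sin (2 * \<beta> j) = 2 * Im \<theta> * ((x j - Re \<theta>) / D j)" for j
    unfolding \<beta>_def sin_double_arctan one_plus using \<sigma> D[of j] by (simp add: field_simps power2_eq_square)
  then have "(\<Sum>j<n. sin (2 * \<beta> j)) = 2 * Im \<theta> * (\<Sum>j<n. (x j - Re \<theta>) / D j)"
    by (simp add: sum_distrib_left)
  then show "(\<Sum>j<n. sin (2 * \<beta> j)) = 0"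
    using cauchy_mle_score_equations(1)[OF assms(1)] unfolding D_def by simp
qed

lemma cos_double_add_cos_double_ge:
  fixes x y g :: real
  assumes "0 \<le> x" "0 \<le> y" "x + y \<le> g" "g < pi"
  shows "2 * min 0 (cos g) \<le> cos (2 * x) + cos (2 * y)"
proof -
  have half: "(2 * x + 2 * y) / 2 = x + y" "(2 * x - 2 * y) / 2 = x - y" by simp_all
  have sum: "cos (2 * x) + cos (2 * y) = 2 * cos (x + y) * cos (x - y)"
    unfolding cos_plus_cos half ..
  have "\<bar>x - y\<bar> \<le> x + y" using assms by linarith
  show ?thesis
  proof (cases "0 \<le> cos (x + y)")
    case True
    then have "x + y \<le> pi / 2"
      using assms cos_gt_zero_pi[of "x + y"] cos_monotone_0_pi[of "pi / 2" "x + y"] by fastforce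
    then have "0 \<le> cos (x - y)"
      using \<open>\<bar>x - y\<bar> \<le> x + y\<close> by (intro cos_ge_zero) auto
    then have "0 \<le> cos (x + y) * cos (x - y)" using True by simp
    moreover have "min 0 (cos g) \<le> 0" by simp
    ultimately show ?thesis unfolding sum by linarith
  next
    case False
    have "cos g \<le> cos (x + y)"
      using assms by (intro cos_monotone_0_pi_le) auto
    moreover have "cos (x + y) \<le> cos (x + y) * cos (x - y)"
      using False by (simp add: mult_le_cancel_left1)
    ultimately show ?thesis unfolding sum by linarith
  qed
qed

text \<open>Measured from the median angle \<open>\<beta>\<^sub>k\<close>, the cosines of the doubled angles sum to zero.
  The median contributes \<open>1\<close>, and the remaining \<open>2k\<close> terms pair up as \<open>j, 2k - j\<close> on either
  side of it, each pair contributing at least \<open>2 min 0 (cos (\<beta>\<^sub>2\<^sub>k - \<beta>\<^sub>0))\<close>.\<close>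
lemma odd_balanced_double_angles_spread:
  fixes \<beta> :: "nat \<Rightarrow> real"
  assumes mono: "\<And>i j. i \<le> j \<Longrightarrow> j \<le> 2 * k \<Longrightarrow> \<beta> i \<le> \<beta> j"
    and spread: "\<beta> (2 * k) - \<beta> 0 < pi"
    and cos_sum: "(\<Sum>j<2 * k + 1. cos (2 * \<beta> j)) = 0"
    and sin_sum: "(\<Sum>j<2 * k + 1. sin (2 * \<beta> j)) = 0"
  shows "2 * real k * cos (\<beta> (2 * k) - \<beta> 0) \<le> -1"
proof -
  define N where "N = {..<2 * k + 1}"
  define f where "f j = cos (2 * \<beta> j - 2 * \<beta> k)" for j
  define m where "m = min 0 (cos (\<beta> (2 * k) - \<beta> 0))"
  have "(\<Sum>j\<in>N. f j)
      = cos (2 * \<beta> k) * (\<Sum>j\<in>N. cos (2 * \<beta> j)) + sin (2 * \<beta> k) * (\<Sum>j\<in>N. sin (2 * \<beta> j))"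
    unfolding f_def cos_diff by (simp add: sum.distrib sum_distrib_left algebra_simps)
  then have "(\<Sum>j\<in>N. f j) = 0" unfolding N_def cos_sum sin_sum by simp
  moreover have "(\<Sum>j\<in>N. f (2 * k - j)) = (\<Sum>j\<in>N. f j)"
    unfolding N_def using sum.nat_diff_reindex[of f "2 * k + 1"] by simp
  ultimately have total: "(\<Sum>j\<in>N. f j + f (2 * k - j)) = 0" by (simp add: sum.distrib)
  have pair_le_half: "2 * m \<le> f j + f (2 * k - j)" if "j \<le> k" for j
  proof -
    have "2 * m \<le> cos (2 * (\<beta> k - \<beta> j)) + cos (2 * (\<beta> (2 * k - j) - \<beta> k))"
      unfolding m_def using that spread mono[of 0 j] mono[of "2 * k - j" "2 * k"]
      by (intro cos_double_add_cos_double_ge) (auto intro!: mono)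
    moreover have "cos (2 * (\<beta> k - \<beta> j)) = f j"
      unfolding f_def by (metis cos_minus minus_diff_eq right_diff_distrib)
    ultimately show ?thesis
      unfolding f_def by (simp add: right_diff_distrib)
  qed
  have pair: "2 * m \<le> f j + f (2 * k - j)" if "j \<in> N" for j
  proof (cases "j \<le> k")
    case False
    then show ?thesis
      using that pair_le_half[of "2 * k - j"] unfolding N_def by (simp add: add.commute)
  qed (rule pair_le_half)
  have k: "k \<in> N" unfolding N_def by simp
  have "real (card (N - {k})) * (2 * m) \<le> (\<Sum>j\<in>N - {k}. f j + f (2 * k - j))"
    using pair by (intro sum_bounded_below) auto
  also have "\<dots> = -2"
    using total sum.remove[of N k "\<lambda>j. f j + f (2 * k - j)"] k unfolding N_def f_def by simp
  finally have "2 * real k * m \<le> -1"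
    using k unfolding N_def by (simp add: algebra_simps)
  then show ?thesis unfolding m_def by (simp add: min_def split: if_splits)
qed

lemma min_zero_le_cos_arctan_diff: "min 0 (1 + a * b) \<le> cos (arctan a - arctan b)"
proof -
  have "1 \<le> sqrt (1 + a\<^sup>2) * sqrt (1 + b\<^sup>2)"
    by (metis mult_mono' mult_1 real_sqrt_ge_one le_add_same_cancel1 zero_le_power2 zero_le_one)
  moreover have "cos (arctan a - arctan b) = (1 + a * b) / (sqrt (1 + a\<^sup>2) * sqrt (1 + b\<^sup>2))"
    unfolding cos_diff cos_arctan sin_arctan by (simp add: add_divide_distrib)
  ultimately show ?thesis
    by (cases "0 \<le> 1 + a * b") (simp_all add: le_divide_eq)
qed

lemma rel_pos_endpoint_product:
  assumes "x 0 < x (n - 1)" "0 < Im \<theta>"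
  defines "\<xi> \<equiv> rel_pos n x \<theta>"
  shows "1 + (x 0 - Re \<theta>) / Im \<theta> * ((x (n - 1) - Re \<theta>) / Im \<theta>)
           = ((cmod \<xi>)\<^sup>2 - 1) / (Im \<xi>)\<^sup>2"
proof -
  define a b where "a = x 0" and "b = x (n - 1)"
  have "a < b" using assms(1) unfolding a_def b_def .
  have Re: "Re \<xi> = (2 * Re \<theta> - (a + b)) / (b - a)" and Im: "Im \<xi> = 2 * Im \<theta> / (b - a)"
    unfolding \<xi>_def rel_pos_def a_def b_def by simp_all
  define h where "h = b - a"
  have left: "a - Re \<theta> = - h * (1 + Re \<xi>) / 2"
    and right: "b - Re \<theta> = h * (1 - Re \<xi>) / 2"
    and scale: "Im \<theta> = h * Im \<xi> / 2"
    unfolding Re Im h_def using \<open>a < b\<close> by (simp_all add: field_simps)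
  have "Im \<xi> \<noteq> 0" "h \<noteq> 0" using Im \<open>a < b\<close> assms(2) unfolding h_def by simp_all
  then show ?thesis
    unfolding a_def[symmetric] b_def[symmetric] left right scale cmod_power2
    by (simp add: field_simps power2_eq_square)
qed

lemma odd_sample_cauchy_mle_endpoints:
  assumes "n = 2 * k + 1" "ordered_sample n x" "is_cauchy_mle n x \<theta>"
  shows "2 * real k * (1 + (x 0 - Re \<theta>) / Im \<theta> * ((x (2 * k) - Re \<theta>) / Im \<theta>)) \<le> -1"
proof -
  have \<sigma>: "0 < Im \<theta>" using assms(3) unfolding is_cauchy_mle_def by simp
  define s where "s j = (x j - Re \<theta>) / Im \<theta>" for j
  define \<beta> where "\<beta> j = arctan (s j)" for j
  have mono: "\<beta> i \<le> \<beta> j" if "i \<le> j" "j \<le> 2 * k" for i j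
  proof -
    have "x i \<le> x j"
      using assms(1,2) that unfolding ordered_sample_def by (cases "i = j") (auto intro: less_imp_le)
    then show ?thesis
      unfolding \<beta>_def s_def arctan_le_iff using \<sigma> by (simp add: divide_right_mono)
  qed
  have "\<beta> (2 * k) - \<beta> 0 < pi"
    unfolding \<beta>_def using arctan_ubound[of "s (2 * k)"] arctan_lbound[of "s 0"] by simp
  with mono cauchy_mle_double_angles_balanced[OF assms(3)]
  have "2 * real k * cos (\<beta> (2 * k) - \<beta> 0) \<le> -1"
    unfolding assms(1) \<beta>_def s_def by (intro odd_balanced_double_angles_spread) auto
  moreover have "min 0 (1 + s 0 * s (2 * k)) \<le> cos (\<beta> (2 * k) - \<beta> 0)"
    unfolding \<beta>_def using min_zero_le_cos_arctan_diff[of "s (2 * k)" "s 0"] by (simp add: mult.commute)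
  ultimately have "2 * real k * min 0 (1 + s 0 * s (2 * k)) \<le> -1"
    by (smt (verit) mult_left_mono of_nat_0_le_iff)
  then show ?thesis
    unfolding s_def by (auto simp: min_def split: if_splits)
qed

lemma odd_sample_cauchy_mle_rel_pos_bound:
  assumes "odd n" "ordered_sample n x" "is_cauchy_mle n x \<theta>"
  defines "\<xi> \<equiv> rel_pos n x \<theta>"
  shows "(Im \<xi>)\<^sup>2 \<le> (n - 1) * (1 - (cmod \<xi>)\<^sup>2)"
proof -
  obtain k where n: "n = 2 * k + 1" using assms(1) oddE by blast
  have \<sigma>: "0 < Im \<theta>" using assms(3) unfolding is_cauchy_mle_def by simp
  define P where "P = 1 + (x 0 - Re \<theta>) / Im \<theta> * ((x (n - 1) - Re \<theta>) / Im \<theta>)"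
  have neg: "2 * real k * P \<le> -1"
    using odd_sample_cauchy_mle_endpoints[OF n assms(2,3)] unfolding P_def n by simp
  then have "0 < k" by (cases k) auto
  then have spread: "x 0 < x (n - 1)"
    using assms(2) n unfolding ordered_sample_def by simp
  have "Im \<xi> \<noteq> 0"
    using spread \<sigma> unfolding \<xi>_def rel_pos_def by simp
  then have "P * (Im \<xi>)\<^sup>2 = (cmod \<xi>)\<^sup>2 - 1"
    using rel_pos_endpoint_product[OF spread \<sigma>] unfolding P_def \<xi>_def by simp
  moreover have "2 * real k * (P * (Im \<xi>)\<^sup>2) \<le> - (Im \<xi>)\<^sup>2"
    using mult_right_mono[OF neg, of "(Im \<xi>)\<^sup>2"] by (simp add: mult.assoc)
  ultimately have "2 * real k * ((cmod \<xi>)\<^sup>2 - 1) \<le> - (Im \<xi>)\<^sup>2"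
    by simp
  then show ?thesis
    unfolding n by (simp add: algebra_simps)
qed

theorem mainTheorem11:
  shows "(\<forall>n::nat. n \<ge> 4 \<longrightarrow> even n \<longrightarrow>
            (\<forall>\<xi>. 0 < Im \<xi> \<longrightarrow> \<xi> \<in> ball 0 1 \<longrightarrow>
               (\<exists>x. ordered_sample n x \<and> mle_rel_pos_is n x \<xi>)))
       \<and> (\<forall>n::nat. n \<ge> 3 \<longrightarrow> odd n \<longrightarrow>
            (\<exists>\<epsilon>>0. \<forall>\<xi>. 0 < Im \<xi> \<longrightarrow> \<xi> \<in> ball \<i> \<epsilon> \<longrightarrow>
               \<not> (\<exists>x. ordered_sample n x \<and> mle_rel_pos_is n x \<xi>)))"
proof (intro conjI allI impI)
  fix n :: nat and \<xi> :: complex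
  assume "n \<ge> 4" "even n" "0 < Im \<xi>" "\<xi> \<in> ball 0 1"
  moreover obtain k where "n = 2 * k" using \<open>even n\<close> by blast
  ultimately show "\<exists>x. ordered_sample n x \<and> mle_rel_pos_is n x \<xi>"
    by (intro even_sample_with_mle_rel_pos[of k, folded \<open>n = 2 * k\<close>]) auto
next
  fix n :: nat
  assume "n \<ge> 3" "odd n"
  define U where "U = {\<xi>. (real n - 1) * (1 - (cmod \<xi>)\<^sup>2) < (Im \<xi>)\<^sup>2}"
  have "open U" unfolding U_def by (intro open_Collect_less continuous_intros)
  moreover have "\<i> \<in> U" unfolding U_def by simp
  ultimately obtain \<epsilon> where "0 < \<epsilon>" "ball \<i> \<epsilon> \<subseteq> U" by (meson openE)
  moreover have "\<xi> \<notin> U" if "ordered_sample n x" "mle_rel_pos_is n x \<xi>" for x \<xi>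
    using that odd_sample_cauchy_mle_rel_pos_bound[OF \<open>odd n\<close>]
    unfolding U_def mle_rel_pos_is_def by (auto simp: not_less)
  ultimately show "\<exists>\<epsilon>>0. \<forall>\<xi>. 0 < Im \<xi> \<longrightarrow> \<xi> \<in> ball \<i> \<epsilon> \<longrightarrow>
                     \<not> (\<exists>x. ordered_sample n x \<and> mle_rel_pos_is n x \<xi>)"
    by blast
qed

end
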